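(* For every $n\ge0$, $\phi_n(x)=(x-1)\cdot U^{\mathrm{e}}_n(x)\cdot S_n(x)$.
   Context: $U_n(x)$ is the Chebyshev polynomial of the second kind ($U_n(\cos\theta)=\sin((n+1)\theta)/\sin\theta$), with $U_{-1}=0$. The partial Chebyshev polynomial $U^{\mathrm{e}}_n$ is the polynomial with $U^{\mathrm{e}}_n(\cos\theta)=\frac{\sin((n+1)\theta/2)}{\sin(\theta/2)}$ for even $n$ and $U^{\mathrm{e}}_n(\cos\theta)=\frac{\sin((n+1)\theta/2)}{\sin\theta}$ for odd $n$. Define $\phi_n(x)=((n+1)x^2-3x-n)U_n(x)+(x+1)(U_{n-1}(x)+1)$ and, for $n\ge0$, $S_{2n}(x)=(2nx+x+2n-1)U_n(x)-(2nx+3x+2n+1)U_{n-1}(x)$, $S_{2n+1}(x)=2(2nx^2+2x^2+2nx-x-1)U_n(x)-2(2nx+3x+2n+1)U_{n-1}(x)$. *)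

theory Defs
  imports "HOL-Analysis.Analysis" "HOL-Computational_Algebra.Polynomial"
begin

text \<open>Chebyshev polynomials of the second kind, via the standard recurrence
  (U_0 = 1, U_1 = 2x, U_{k+2} = 2x U_{k+1} - U_k), so that U_k(cos t) = sin((k+1)t)/sin t.\<close>
fun chebU :: "nat \<Rightarrow> real poly" where
  "chebU 0 = 1"
| "chebU (Suc 0) = [:0, 2:]"
| "chebU (Suc (Suc k)) = [:0, 2:] * chebU (Suc k) - chebU k"

definition U :: "nat \<Rightarrow> real \<Rightarrow> real" where
  "U k x = poly (chebU k) x"

definition Uprev :: "nat \<Rightarrow> real \<Rightarrow> real" where
  "Uprev k x = (if k = 0 then 0 else U (k - 1) x)"

definition chebUe :: "nat \<Rightarrow> real poly" where
  "chebUe n = (THE p. \<forall>t::real.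
      let d = (if even n then sin (t / 2) else sin t) in
      d \<noteq> 0 \<longrightarrow> poly p (cos t) = sin ((real n + 1) * t / 2) / d)"

definition Ue :: "nat \<Rightarrow> real \<Rightarrow> real" where
  "Ue n x = poly (chebUe n) x"

definition phi :: "nat \<Rightarrow> real \<Rightarrow> real" where
  "phi n x = ((real n + 1) * x^2 - 3 * x - real n) * U n x + (x + 1) * (Uprev n x + 1)"

definition S :: "nat \<Rightarrow> real \<Rightarrow> real" where
  "S k x = (let m = k div 2; r = real m in
     if even k then
       (2*r*x + x + 2*r - 1) * U m x - (2*r*x + 3*x + 2*r + 1) * Uprev m x
     else
       2 * (2*r*x^2 + 2*x^2 + 2*r*x - x - 1) * U m x
         - 2 * (2*r*x + 3*x + 2*r + 1) * Uprev m x)"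

end

theory Submission
  imports Defs
begin

text \<open>Write \<open>a = U\<^sub>m(x)\<close>, \<open>b = U\<^sub>m\<^sub>-\<^sub>1(x)\<close>. The addition formula for \<open>U\<close> expresses
  \<open>U\<^sub>n\<close> and \<open>U\<^sub>n\<^sub>-\<^sub>1\<close> for \<open>n = 2m\<close> and \<open>n = 2m + 1\<close> as quadratic forms in \<open>a, b\<close>, while
  the trigonometric definition identifies \<open>U\<^sup>e\<^sub>n\<close> with \<open>a + b\<close> (\<open>n\<close> even) resp. \<open>a\<close> (\<open>n\<close> odd).
  Replacing the constant \<open>1\<close> in \<open>\<phi>\<^sub>n\<close> by the Cassini-type identity
  \<open>a\<^sup>2 - 2xab + b\<^sup>2 = 1\<close> makes \<open>\<phi>\<^sub>n\<close> a form in \<open>a, b\<close>, which factors by pure algebra.\<close>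

lemma U_0 [simp]: "U 0 x = 1"
  by (simp add: U_def)

lemma U_1 [simp]: "U (Suc 0) x = 2 * x"
  by (simp add: U_def)

lemma U_Suc_Suc [simp]: "U (Suc (Suc k)) x = 2 * x * U (Suc k) x - U k x"
  by (simp add: U_def)

lemma Uprev_0 [simp]: "Uprev 0 x = 0"
  by (simp add: Uprev_def)

lemma Uprev_Suc [simp]: "Uprev (Suc k) x = U k x"
  by (simp add: Uprev_def)

lemma U_Suc: "U (Suc k) x = 2 * x * U k x - Uprev k x"
  by (cases k) auto

lemma Uprev_eq: "Uprev k x = 2 * x * U k x - U (Suc k) x"
  by (simp add: U_Suc)

lemma U_add: "U (m + k) x = U m x * U k x - Uprev m x * Uprev k x"
proof (induction k rule: chebU.induct)
  case 1
  show ?case by simp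
next
  case 2
  show ?case by (simp add: U_Suc[of m])
next
  case (3 k)
  have "U (m + Suc (Suc k)) x = 2 * x * U (m + Suc k) x - U (m + k) x"
    using U_Suc_Suc[of "m + k" x] by simp
  then show ?case
    unfolding 3 by (simp add: U_Suc[of k] algebra_simps)
qed

lemma U_Uprev_Cassini: "(U m x)\<^sup>2 - 2 * x * U m x * Uprev m x + (Uprev m x)\<^sup>2 = 1"
  by (induction m) (simp_all add: U_Suc power2_eq_square algebra_simps)

lemma U_double: "U (2 * m) x = (U m x)\<^sup>2 - (Uprev m x)\<^sup>2"
  using U_add[of m m x] by (simp add: mult_2 power2_eq_square)

lemma U_double_Suc: "U (2 * m + 1) x = U m x * (2 * x * U m x - 2 * Uprev m x)"
proof -
  have "U (2 * m + 1) x = U m x * U (Suc m) x - Uprev m x * U m x"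
    using U_add[of m "Suc m" x] by (simp add: mult_2)
  then show ?thesis
    by (simp add: U_Suc[of m] algebra_simps)
qed

lemma Uprev_double:
  "Uprev (2 * m) x = 2 * U m x * Uprev m x - 2 * x * (Uprev m x)\<^sup>2"
  unfolding Uprev_eq[of "2 * m"] U_double
  using U_double_Suc[of m x] by (simp add: power2_eq_square algebra_simps)

lemma Uprev_double_Suc: "Uprev (2 * m + 1) x = (U m x)\<^sup>2 - (Uprev m x)\<^sup>2"
  using U_double[of m x] by simp

lemma sin_add_sin_diff: "sin (a + d) + sin (a - d) = 2 * cos d * sin (a :: real)"
  by (simp add: sin_add sin_diff)

lemma sin_mult_U_cos: "sin t * U k (cos t) = sin ((real k + 1) * t)"
proof (induction k rule: chebU.induct)
  case 1
  show ?case by simp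
next
  case 2
  show ?case by (simp add: sin_double)
next
  case (3 k)
  have "sin ((real k + 3) * t) = 2 * cos t * sin ((real k + 2) * t) - sin ((real k + 1) * t)"
    using sin_add_sin_diff[of "(real k + 2) * t" t] by (simp add: algebra_simps)
  then show ?case
    using 3 by (simp add: algebra_simps)
qed

lemma sin_mult_U_add_Uprev_cos:
  "sin u * (U m (cos (2 * u)) + Uprev m (cos (2 * u))) = sin ((2 * real m + 1) * u)"
proof (induction m rule: chebU.induct)
  case 1
  show ?case by simp
next
  case 2
  have "sin (3 * u) = sin (u + 2 * u)"
    by simp
  also have "\<dots> = sin u * (2 * cos (2 * u) + 1)"
    unfolding sin_add sin_double cos_double_cos by (simp add: algebra_simps power2_eq_square)
  finally show ?case
    by (simp add: algebra_simps)
next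
  case (3 m)
  have sin_rec: "sin ((2 * real m + 5) * u)
      = 2 * cos (2 * u) * sin ((2 * real m + 3) * u) - sin ((2 * real m + 1) * u)"
    using sin_add_sin_diff[of "(2 * real m + 3) * u" "2 * u"] by (simp add: algebra_simps)
  have "sin u * (U (Suc (Suc m)) (cos (2 * u)) + Uprev (Suc (Suc m)) (cos (2 * u)))
      = 2 * cos (2 * u) * (sin u * (U (Suc m) (cos (2 * u)) + Uprev (Suc m) (cos (2 * u))))
        - sin u * (U m (cos (2 * u)) + Uprev m (cos (2 * u)))"
    by (simp add: U_Suc[of m] algebra_simps)
  also have "\<dots> = sin ((2 * real m + 5) * u)"
    unfolding 3 sin_rec by (simp add: algebra_simps)
  finally show ?case
    by (simp add: algebra_simps)
qed

lemma poly_eq_on_infinite_set: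
  fixes p q :: "'a :: idom poly"
  assumes "infinite A" and "\<And>y. y \<in> A \<Longrightarrow> poly p y = poly q y"
  shows "p = q"
proof -
  have "A \<subseteq> {y. poly (p - q) y = 0}"
    using assms(2) by auto
  then have "infinite {y. poly (p - q) y = 0}"
    using assms(1) finite_subset by blast
  then show ?thesis
    using poly_roots_finite[of "p - q"] by auto
qed

text \<open>The description in \<open>chebUe\<close> is unique: at \<open>t = arccos y\<close>, \<open>-1 < y < 1\<close>, neither
  denominator vanishes, so two candidates agree on the infinite set \<open>(-1, 1)\<close>.\<close>
lemma chebUe_eqI:
  assumes "\<forall>t::real. let d = (if even n then sin (t / 2) else sin t) in
      d \<noteq> 0 \<longrightarrow> poly q (cos t) = sin ((real n + 1) * t / 2) / d"
  shows "chebUe n = q"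
  unfolding chebUe_def
proof (rule the_equality)
  fix p
  assume p: "\<forall>t::real. let d = (if even n then sin (t / 2) else sin t) in
      d \<noteq> 0 \<longrightarrow> poly p (cos t) = sin ((real n + 1) * t / 2) / d"
  show "p = q"
  proof (rule poly_eq_on_infinite_set[of "{-1<..<1}"])
    fix y :: real
    assume "y \<in> {-1<..<1}"
    then have y: "-1 < y" "y < 1"
      by auto
    define t where "t = arccos y"
    have "0 < t" "t < pi"
      using y arccos_lt_bounded by (auto simp: t_def)
    then have "sin t \<noteq> 0" "sin (t / 2) \<noteq> 0"
      using sin_gt_zero[of t] sin_gt_zero[of "t / 2"] by auto
    then show "poly p y = poly q y"
      using p[rule_format, of t] assms[rule_format, of t] y by (simp add: Let_def t_def)
  qed simp
qed (fact assms)

lemma Ue_even: "Ue (2 * m) x = U m x + Uprev m x"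
proof -
  have "chebUe (2 * m) = chebU m + (if m = 0 then 0 else chebU (m - 1))"
  proof (rule chebUe_eqI, intro allI)
    fix t :: real
    have "sin (t / 2) * (U m (cos t) + Uprev m (cos t)) = sin ((2 * real m + 1) * (t / 2))"
      using sin_mult_U_add_Uprev_cos[of "t / 2" m] by simp
    moreover have "poly (if m = 0 then 0 else chebU (m - 1)) y = Uprev m y" for y
      by (simp add: Uprev_def U_def)
    ultimately show "let d = (if even (2 * m) then sin (t / 2) else sin t) in d \<noteq> 0 \<longrightarrow>
        poly (chebU m + (if m = 0 then 0 else chebU (m - 1))) (cos t)
          = sin ((real (2 * m) + 1) * t / 2) / d"
      by (simp add: Let_def U_def[symmetric] field_simps)
  qed
  then show ?thesis
    by (simp add: Ue_def Uprev_def U_def)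
qed

lemma Ue_odd: "Ue (2 * m + 1) x = U m x"
proof -
  have "chebUe (2 * m + 1) = chebU m"
  proof (rule chebUe_eqI, intro allI)
    fix t :: real
    have half_angle: "(real (2 * m + 1) + 1) * t / 2 = (real m + 1) * t"
      by (simp add: field_simps)
    show "let d = (if even (2 * m + 1) then sin (t / 2) else sin t) in d \<noteq> 0 \<longrightarrow>
        poly (chebU m) (cos t) = sin ((real (2 * m + 1) + 1) * t / 2) / d"
      using sin_mult_U_cos[of t m] unfolding half_angle by (simp add: Let_def U_def field_simps)
  qed
  then show ?thesis
    by (simp add: Ue_def U_def)
qed

lemma phi_even_factorization: "phi (2 * m) x = (x - 1) * Ue (2 * m) x * S (2 * m) x"
proof -
  define a b where "a = U m x" and "b = Uprev m x"
  have "phi (2 * m) x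
      = ((2 * real m + 1) * x\<^sup>2 - 3 * x - 2 * real m) * (a\<^sup>2 - b\<^sup>2)
        + (x + 1) * (2 * a * b - 2 * x * b\<^sup>2 + (a\<^sup>2 - 2 * x * a * b + b\<^sup>2))"
    unfolding phi_def U_double Uprev_double U_Uprev_Cassini a_def b_def by simp
  also have "\<dots> = (x - 1) * (a + b)
      * ((2 * real m * x + x + 2 * real m - 1) * a - (2 * real m * x + 3 * x + 2 * real m + 1) * b)"
    by (simp add: power2_eq_square algebra_simps)
  finally show ?thesis
    by (simp add: Ue_even S_def Let_def a_def b_def)
qed

lemma phi_odd_factorization:
  "phi (2 * m + 1) x = (x - 1) * Ue (2 * m + 1) x * S (2 * m + 1) x"
proof -
  define a b where "a = U m x" and "b = Uprev m x"
  have "phi (2 * m + 1) x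
      = ((2 * real m + 2) * x\<^sup>2 - 3 * x - (2 * real m + 1)) * (a * (2 * x * a - 2 * b))
        + (x + 1) * (a\<^sup>2 - b\<^sup>2 + (a\<^sup>2 - 2 * x * a * b + b\<^sup>2))"
    unfolding phi_def U_double_Suc Uprev_double_Suc U_Uprev_Cassini a_def b_def by simp
  also have "\<dots> = (x - 1) * a * (2 * (2 * real m * x\<^sup>2 + 2 * x\<^sup>2 + 2 * real m * x - x - 1) * a
      - 2 * (2 * real m * x + 3 * x + 2 * real m + 1) * b)"
    by (simp add: power2_eq_square algebra_simps)
  finally show ?thesis
    unfolding Ue_odd by (simp add: S_def Let_def a_def b_def)
qed

theorem mainTheorem11:
  fixes n :: nat and x :: real
  shows "phi n x = (x - 1) * Ue n x * S n x"
proof (cases "even n")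
  case True
  then obtain m where "n = 2 * m"
    by (auto elim: evenE)
  then show ?thesis
    using phi_even_factorization by simp
next
  case False
  then obtain m where "n = 2 * m + 1"
    by (auto elim: oddE)
  then show ?thesis
    using phi_odd_factorization by simp
qed

end
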